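(* Let $f_1,\dots,f_{t-1}$ be polynomials $f_s(z)=\sum_{d=0}^Dc_{s,d}z^d$, $f_0(z)=z$, let $\tau_0^2>0$ and define $\tau_{s+1}^2=\mathbb E[f_s(\tau_sZ)^2]$, $Z\sim\mathcal N(0,1)$. For integers $t\ge1$, $m\ge1$, \[ \tau_t^{2m}\,(2m-1)!!=\sum_{T\in\mathbb T_{t,2m}}\mathrm{Wick}(T)\prod_{v}c_v\cdot\tau_0^{|L(T)|}, \] where $L(T)$ is the set of level-$0$ vertices of $T$.
   Context: $\mathbb T_{t,2m}$ is the set of rooted ordered trees obtained as follows: the root is at level $t$ and has $2m$ children (root weight $c_{\text{root}}=1$); each vertex $v$ at level $s\in\{1,\dots,t-1\}$ is assigned a degree $d\in\{0,\dots,D\}$, receives weight $c_v=c_{s,d}$ and has exactly $d$ children at level $s-1$; level-0 vertices are leaves with weight $1$. Distinct choices of degrees give distinct trees. For a rooted tree $T$, let $V_\ell$ be the set of vertices at distance $\ell$ from the root and $p(v)$ the parent of $v$; a row-wise Wick pairing is a family $(\pi_\ell)_{\ell\ge1}$ with $\pi_\ell$ a partition of $V_\ell$ into unordered pairs such that for each pair $\{v,v'\}\in\pi_\ell$, $\ell\ge2$, the parents $p(v),p(v')$ are equal or form a pair of $\pi_{\ell-1}$; $\mathrm{Wick}(T)$ is the number of such families. *)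

theory Defs
  imports "HOL-Probability.Probability"
begin

datatype otree = Node "otree list"

fun children :: "otree \<Rightarrow> otree list" where
  "children (Node cs) = cs"

text \<open>valid D s T: T is a subtree whose root sits at level s; level-0 vertices are
  leaves, vertices at level s \<ge> 1 have degree in {0..D}.\<close>
fun valid :: "nat \<Rightarrow> nat \<Rightarrow> otree \<Rightarrow> bool" where
  "valid D 0 (Node cs) = (cs = [])"
| "valid D (Suc s) (Node cs) = (length cs \<le> D \<and> (\<forall>c\<in>set cs. valid D s c))"

definition trees :: "nat \<Rightarrow> nat \<Rightarrow> nat \<Rightarrow> otree set" where
  "trees D t m = {Node cs | cs. length cs = 2 * m \<and> (\<forall>c\<in>set cs. valid D (t - 1) c)}"

fun subweight :: "(nat \<Rightarrow> nat \<Rightarrow> real) \<Rightarrow> nat \<Rightarrow> otree \<Rightarrow> real" where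
  "subweight c 0 (Node cs) = 1"
| "subweight c (Suc s) (Node cs) = c (Suc s) (length cs) * prod_list (map (subweight c s) cs)"

definition tree_weight :: "(nat \<Rightarrow> nat \<Rightarrow> real) \<Rightarrow> nat \<Rightarrow> otree \<Rightarrow> real" where
  "tree_weight c t T = prod_list (map (subweight c (t - 1)) (children T))"

fun level0 :: "nat \<Rightarrow> otree \<Rightarrow> nat" where
  "level0 0 (Node cs) = 1"
| "level0 (Suc s) (Node cs) = sum_list (map (level0 s) cs)"

definition num_leaves :: "nat \<Rightarrow> otree \<Rightarrow> nat" where
  "num_leaves t T = sum_list (map (level0 (t - 1)) (children T))"

text \<open>Vertices are addressed by paths (lists of child indices) from the root.\<close>
function positions :: "otree \<Rightarrow> nat list set" where
  "positions (Node cs) = insert [] (\<Union>i\<in>{..<length cs}. (#) i ` positions (cs ! i))"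
  by pat_completeness auto
termination
  by (relation "Wellfounded.measure size") (auto simp: less_Suc_eq_le intro!: size_list_estimation' nth_mem)

text \<open>V_l: vertices at distance l from the root; the parent of v is butlast v.\<close>
definition verts_at :: "otree \<Rightarrow> nat \<Rightarrow> nat list set" where
  "verts_at T l = {p \<in> positions T. length p = l}"

definition is_pairing :: "'a set \<Rightarrow> 'a set set \<Rightarrow> bool" where
  "is_pairing S P \<longleftrightarrow> (\<forall>e\<in>P. card e = 2 \<and> e \<subseteq> S) \<and> (\<forall>x\<in>S. \<exists>!e. e \<in> P \<and> x \<in> e)"

text \<open>Row-wise Wick pairings (pi_l)_{l \<ge> 1}; the unused index 0 is normalised to {}.\<close>
definition wick_pairings :: "otree \<Rightarrow> (nat \<Rightarrow> nat list set set) set" where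
  "wick_pairings T = {\<pi>. \<pi> 0 = {} \<and> (\<forall>l\<ge>1. is_pairing (verts_at T l) (\<pi> l)) \<and>
      (\<forall>l\<ge>2. \<forall>v v'. {v, v'} \<in> \<pi> l \<longrightarrow>
          butlast v = butlast v' \<or> {butlast v, butlast v'} \<in> \<pi> (l - 1))}"

definition Wick :: "otree \<Rightarrow> nat" where
  "Wick T = card (wick_pairings T)"

definition fpoly :: "(nat \<Rightarrow> nat \<Rightarrow> real) \<Rightarrow> nat \<Rightarrow> nat \<Rightarrow> real \<Rightarrow> real" where
  "fpoly c D s z = (if s = 0 then z else (\<Sum>d\<le>D. c s d * z ^ d))"

fun tau2 :: "(nat \<Rightarrow> nat \<Rightarrow> real) \<Rightarrow> nat \<Rightarrow> real \<Rightarrow> nat \<Rightarrow> real" where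
  "tau2 c D tau0 0 = tau0 ^ 2"
| "tau2 c D tau0 (Suc s) =
     (\<integral>x. std_normal_density x * (fpoly c D s (sqrt (tau2 c D tau0 s) * x))^2 \<partial>lborel)"

definition odd_dfact :: "nat \<Rightarrow> nat" where
  "odd_dfact m = (\<Prod>i<m. 2 * i + 1)"

end

theory Submission
  imports Defs
begin

text \<open>
  Let \<open>F(Q)\<close> be the weighted number of row-wise Wick pairings of a forest whose roots \<open>Q\<close> all lie
  on one row, summed over all choices of the subtrees (of a fixed height) hanging from the roots.
  Fix a root \<open>x\<close>.  By the ancestor condition, a pairing containing the block \<open>{x, y}\<close> never pairs a
  descendant of \<open>x\<close> or \<open>y\<close> with any other vertex, so it splits into a pairing of the children of
  \<open>x\<close> and \<open>y\<close>, starting one row lower, and a pairing of the forest on \<open>Q - {x, y}\<close>.  Hence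
  \<open>F(Q) = \<Sum>\<^sub>y\<^sub>\<noteq>\<^sub>x K F(Q - {x, y})\<close> with a pair weight \<open>K\<close> independent of \<open>x\<close> and \<open>y\<close>, and
  \<open>F(Q) = (|Q| - 1)!! K^(|Q|/2)\<close> as in Isserlis' theorem.  Splitting \<open>K\<close> by the degrees \<open>d, d'\<close> of
  \<open>x\<close> and \<open>y\<close> and applying the same formula to their children gives, by induction on the height,
  \<open>K = \<Sum> c\<^sub>s\<^sub>,\<^sub>d c\<^sub>s\<^sub>,\<^sub>d\<^sub>' E[Z^(d+d')] \<tau>\<^sub>s^(d+d') = E[f\<^sub>s(\<tau>\<^sub>s Z)^2] = \<tau>\<^sub>s\<^sub>+\<^sub>1^2\<close>.  A root with
  \<open>2m\<close> children finally contributes \<open>(2m - 1)!! \<tau>\<^sub>t^(2m)\<close>.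
\<close>

lemma is_pairing_block:
  assumes "is_pairing S P" and "e \<in> P"
  obtains a b where "e = {a, b}" "a \<noteq> b" "a \<in> S" "b \<in> S"
  using assms unfolding is_pairing_def by (metis card_2_iff insert_subset)

lemma is_pairing_unique:
  "is_pairing S P \<Longrightarrow> e \<in> P \<Longrightarrow> e' \<in> P \<Longrightarrow> z \<in> e \<Longrightarrow> z \<in> e' \<Longrightarrow> e = e'"
  unfolding is_pairing_def by (metis subsetD)

lemma is_pairing_partner:
  assumes "is_pairing S P" and "z \<in> S"
  obtains z' where "z' \<noteq> z" "{z, z'} \<in> P"
proof -
  obtain e where "e \<in> P" "z \<in> e"
    using assms unfolding is_pairing_def by blast
  with is_pairing_block[OF assms(1) this(1)] that show ?thesis
    by (metis insert_commute insertE singletonD)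
qed

lemma is_pairing_empty: "is_pairing {} {}"
  unfolding is_pairing_def by simp

lemma is_pairing_doubleton: "x \<noteq> y \<Longrightarrow> is_pairing {x, y} {{x, y}}"
  unfolding is_pairing_def by auto

lemma is_pairing_Un:
  assumes "is_pairing A P" "is_pairing B Q" "A \<inter> B = {}"
  shows "is_pairing (A \<union> B) (P \<union> Q)"
  using assms unfolding is_pairing_def by (smt (verit, ccfv_threshold) UnCI UnE disjoint_iff subset_iff)

lemma is_pairing_restrict:
  assumes "is_pairing S P" and "\<And>e. e \<in> P \<Longrightarrow> e \<inter> W \<noteq> {} \<Longrightarrow> e \<subseteq> W"
  shows "is_pairing (S \<inter> W) {e \<in> P. e \<subseteq> W}"
  using assms unfolding is_pairing_def by (smt (verit) IntE disjoint_iff le_inf_iff mem_Collect_eq)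

section \<open>Row-wise Wick pairings below a given row\<close>

definition layer :: "nat list set \<Rightarrow> nat \<Rightarrow> nat list set" where
  "layer V l = {v \<in> V. length v = l}"

text \<open>The first paired row \<open>L\<close> is a parameter, so that the forest below a block on row \<open>L - 1\<close>
  can be paired on its own; the Wick pairings of a tree are the case \<open>L = 1\<close>.\<close>

definition wick_from :: "nat list set \<Rightarrow> nat \<Rightarrow> (nat \<Rightarrow> nat list set set) set" where
  "wick_from V L = {\<pi>. (\<forall>l<L. \<pi> l = {}) \<and> (\<forall>l\<ge>L. is_pairing (layer V l) (\<pi> l)) \<and>
      (\<forall>l>L. \<forall>v v'. {v, v'} \<in> \<pi> l \<longrightarrow>
          butlast v = butlast v' \<or> {butlast v, butlast v'} \<in> \<pi> (l - 1))}"

lemma wick_from_below: "\<pi> \<in> wick_from V L \<Longrightarrow> l < L \<Longrightarrow> \<pi> l = {}"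
  unfolding wick_from_def by blast

lemma wick_from_pairing: "\<pi> \<in> wick_from V L \<Longrightarrow> L \<le> l \<Longrightarrow> is_pairing (layer V l) (\<pi> l)"
  unfolding wick_from_def by blast

lemma wick_from_parent:
  "\<pi> \<in> wick_from V L \<Longrightarrow> L < l \<Longrightarrow> {v, v'} \<in> \<pi> l \<Longrightarrow>
    butlast v = butlast v' \<or> {butlast v, butlast v'} \<in> \<pi> (l - 1)"
  unfolding wick_from_def by blast

lemma wick_from_block:
  assumes "\<pi> \<in> wick_from V L" and "e \<in> \<pi> l"
  obtains a b where "e = {a, b}" "a \<noteq> b" "a \<in> layer V l" "b \<in> layer V l" "L \<le> l"
proof -
  have "L \<le> l"
    using assms wick_from_below[OF assms(1)] by (metis empty_iff not_le)
  with assms that show thesis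
    using is_pairing_block[OF wick_from_pairing[OF assms(1)]] by blast
qed

lemma wick_from_mem:
  assumes "\<pi> \<in> wick_from V L" and "e \<in> \<pi> l" and "v \<in> e"
  shows "v \<in> V" "length v = l" "L \<le> l"
proof -
  obtain a b where "e = {a, b}" "a \<in> layer V l" "b \<in> layer V l" "L \<le> l"
    using wick_from_block[OF assms(1,2)] by metis
  then show "v \<in> V" "length v = l" "L \<le> l"
    using assms(3) by (auto simp: layer_def)
qed

lemma wick_from_ancestors:
  assumes \<pi>: "\<pi> \<in> wick_from V L" and "L \<le> l" "{v, v'} \<in> \<pi> l"
  shows "take L v = take L v' \<or> {take L v, take L v'} \<in> \<pi> L"
  using assms(2,3)
proof (induction l arbitrary: v v' rule: dec_induct)
  case base
  then show ?case
    using wick_from_mem(2)[OF \<pi> base] by simp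
next
  case (step l)
  then have "butlast v = butlast v' \<or> {butlast v, butlast v'} \<in> \<pi> l"
    using wick_from_parent[OF \<pi>, of "Suc l"] by simp
  moreover have "take L (butlast v) = take L v" "take L (butlast v') = take L v'"
    using step.hyps wick_from_mem(2)[OF \<pi> step.prems] by (simp_all add: take_butlast)
  ultimately show ?case
    using step.IH by metis
qed

lemma wick_from_block_closed:
  assumes \<pi>: "\<pi> \<in> wick_from V L" and xy: "{x, y} \<in> \<pi> L" and e: "e \<in> \<pi> l"
    and meets: "e \<inter> {v. take L v \<in> {x, y}} \<noteq> {}"
  shows "e \<subseteq> {v. take L v \<in> {x, y}}"
proof -
  obtain a b where ab: "e = {a, b}" and "L \<le> l"
    using wick_from_block[OF \<pi> e] by metis
  have "take L a = take L b \<or> {take L a, take L b} \<in> \<pi> L"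
    using wick_from_ancestors[OF \<pi> \<open>L \<le> l\<close>] e ab by simp
  moreover have "take L a \<in> {x, y} \<or> take L b \<in> {x, y}"
    using meets ab by auto
  moreover have "{take L a, take L b} = {x, y}"
    if "{take L a, take L b} \<in> \<pi> L" "take L a \<in> {x, y} \<or> take L b \<in> {x, y}"
    using that is_pairing_unique[OF wick_from_pairing[OF \<pi> order_refl] that(1) xy] by blast
  ultimately show ?thesis
    using ab by auto
qed

lemma wick_from_restrict:
  assumes \<pi>: "\<pi> \<in> wick_from V L" and "L \<le> L'" and "W \<subseteq> V"
    and closed: "\<And>l e. e \<in> \<pi> l \<Longrightarrow> e \<inter> W \<noteq> {} \<Longrightarrow> e \<subseteq> W"
    and low: "\<And>v. v \<in> W \<Longrightarrow> L' \<le> length v"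
    and hered: "\<And>v. v \<in> W \<Longrightarrow> L' < length v \<Longrightarrow> butlast v \<in> V \<Longrightarrow> butlast v \<in> W"
  shows "(\<lambda>l. {e \<in> \<pi> l. e \<subseteq> W}) \<in> wick_from W L'"
  unfolding wick_from_def
proof (intro CollectI conjI allI impI)
  fix l assume "l < L'"
  show "{e \<in> \<pi> l. e \<subseteq> W} = {}"
  proof (rule ccontr)
    assume "{e \<in> \<pi> l. e \<subseteq> W} \<noteq> {}"
    then obtain e a b where "e \<in> \<pi> l" "e \<subseteq> W" "e = {a, b}"
      by (metis (no_types, lifting) empty_Collect_eq wick_from_block[OF \<pi>])
    then show False
      using wick_from_mem(2)[OF \<pi>, of e l a] low[of a] \<open>l < L'\<close> by auto
  qed
next
  fix l assume "L' \<le> l"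
  have "is_pairing (layer V l \<inter> W) {e \<in> \<pi> l. e \<subseteq> W}"
    using wick_from_pairing[OF \<pi>, of l] \<open>L \<le> L'\<close> \<open>L' \<le> l\<close> closed
    by (intro is_pairing_restrict) auto
  moreover have "layer V l \<inter> W = layer W l"
    using \<open>W \<subseteq> V\<close> by (auto simp: layer_def)
  ultimately show "is_pairing (layer W l) {e \<in> \<pi> l. e \<subseteq> W}"
    by simp
next
  fix l v v' assume "L' < l" and vv': "{v, v'} \<in> {e \<in> \<pi> l. e \<subseteq> W}"
  then have "butlast v = butlast v' \<or> {butlast v, butlast v'} \<in> \<pi> (l - 1)"
    using wick_from_parent[OF \<pi>] \<open>L \<le> L'\<close> by simp
  moreover have "{butlast v, butlast v'} \<subseteq> W" if "{butlast v, butlast v'} \<in> \<pi> (l - 1)"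
    using wick_from_mem[OF \<pi> that] wick_from_mem(2)[OF \<pi>] vv' \<open>L' < l\<close> hered by auto
  ultimately show "butlast v = butlast v' \<or> {butlast v, butlast v'} \<in> {e \<in> \<pi> (l - 1). e \<subseteq> W}"
    by auto
qed

lemma wick_from_merge:
  assumes \<sigma>: "\<sigma> \<in> wick_from A (Suc L)" and \<rho>: "\<rho> \<in> wick_from B L"
    and "A \<inter> B = {}" and "x \<noteq> y" and xy: "x \<notin> B" "y \<notin> B" "length x = L" "length y = L"
    and A_low: "\<And>v. v \<in> A \<Longrightarrow> Suc L \<le> length v"
    and A_parent: "\<And>v. v \<in> A \<Longrightarrow> length v = Suc L \<Longrightarrow> butlast v \<in> {x, y}"
  shows "(\<lambda>l. \<sigma> l \<union> \<rho> l \<union> (if l = L then {{x, y}} else {})) \<in> wick_from (A \<union> B \<union> {x, y}) L"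
  unfolding wick_from_def
proof (intro CollectI conjI allI impI)
  fix l assume "l < L"
  then show "\<sigma> l \<union> \<rho> l \<union> (if l = L then {{x, y}} else {}) = {}"
    using wick_from_below[OF \<sigma>] wick_from_below[OF \<rho>] by simp
next
  fix l assume "L \<le> l"
  have "is_pairing (layer A l) (\<sigma> l)"
  proof (cases "l = L")
    case True
    then have "layer A l = {}" "\<sigma> l = {}"
      using A_low wick_from_below[OF \<sigma>] by (force simp: layer_def)+
    then show ?thesis by (simp add: is_pairing_empty)
  qed (use \<open>L \<le> l\<close> wick_from_pairing[OF \<sigma>] in simp)
  then have "is_pairing (layer A l \<union> layer B l) (\<sigma> l \<union> \<rho> l)"
    using wick_from_pairing[OF \<rho> \<open>L \<le> l\<close>] \<open>A \<inter> B = {}\<close>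
    by (intro is_pairing_Un) (auto simp: layer_def)
  moreover have "is_pairing (if l = L then {x, y} else {}) (if l = L then {{x, y}} else {})"
    using \<open>x \<noteq> y\<close> by (simp add: is_pairing_empty is_pairing_doubleton)
  moreover have "(layer A l \<union> layer B l) \<inter> (if l = L then {x, y} else {}) = {}"
    using xy A_low by (force simp: layer_def)
  ultimately have "is_pairing (layer A l \<union> layer B l \<union> (if l = L then {x, y} else {}))
      (\<sigma> l \<union> \<rho> l \<union> (if l = L then {{x, y}} else {}))"
    by (rule is_pairing_Un)
  moreover have "layer (A \<union> B \<union> {x, y}) l = layer A l \<union> layer B l \<union> (if l = L then {x, y} else {})"
    using xy by (auto simp: layer_def)
  ultimately show "is_pairing (layer (A \<union> B \<union> {x, y}) l) (\<sigma> l \<union> \<rho> l \<union> (if l = L then {{x, y}} else {}))"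
    by simp
next
  fix l v v' assume "L < l" and vv': "{v, v'} \<in> \<sigma> l \<union> \<rho> l \<union> (if l = L then {{x, y}} else {})"
  let ?\<pi> = "\<lambda>l. \<sigma> l \<union> \<rho> l \<union> (if l = L then {{x, y}} else {})"
  show "butlast v = butlast v' \<or> {butlast v, butlast v'} \<in> ?\<pi> (l - 1)"
  proof (cases "{v, v'} \<in> \<rho> l")
    case True
    then show ?thesis using wick_from_parent[OF \<rho> \<open>L < l\<close>] by auto
  next
    case False
    then have \<sigma>l: "{v, v'} \<in> \<sigma> l" using vv' \<open>L < l\<close> by simp
    show ?thesis
    proof (cases "l = Suc L")
      case True
      then have "butlast v \<in> {x, y}" "butlast v' \<in> {x, y}"
        using A_parent wick_from_mem[OF \<sigma> \<sigma>l] by auto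
      then show ?thesis using True by auto
    next
      case False
      then show ?thesis using wick_from_parent[OF \<sigma> _ \<sigma>l] \<open>L < l\<close> by auto
    qed
  qed
qed

lemma wick_from_nonempty: "\<pi> \<in> wick_from V L \<Longrightarrow> e \<in> \<pi> l \<Longrightarrow> e \<noteq> {}"
  by (metis wick_from_block insert_not_empty)

lemma wick_from_block_cases:
  assumes \<pi>: "\<pi> \<in> wick_from V L" and xy: "{x, y} \<in> \<pi> L" "x \<noteq> y" and e: "e \<in> \<pi> l"
  shows "e \<subseteq> {v \<in> V. L < length v \<and> take L v \<in> {x, y}} \<or> e \<subseteq> {v \<in> V. take L v \<notin> {x, y}} \<or>
    (l = L \<and> e = {x, y})"
proof -
  obtain a b where ab: "e = {a, b}" "a \<noteq> b" and "L \<le> l"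
    using wick_from_block[OF \<pi> e] by metis
  have "e \<subseteq> V" "\<And>v. v \<in> e \<Longrightarrow> length v = l"
    using wick_from_mem[OF \<pi> e] by auto
  moreover have "e \<subseteq> {v. take L v \<in> {x, y}}" if "\<not> e \<subseteq> {v. take L v \<notin> {x, y}}"
    using that wick_from_block_closed[OF \<pi> xy(1) e] by blast
  moreover have "e = {x, y}" if "l = L" "e \<subseteq> {v. take L v \<in> {x, y}}"
    using that ab \<open>\<And>v. v \<in> e \<Longrightarrow> length v = l\<close> by (auto simp: doubleton_eq_iff)
  ultimately show ?thesis
    using \<open>L \<le> l\<close> by (cases "l = L") auto
qed

lemma wick_from_split_at_block:
  assumes \<pi>: "\<pi> \<in> wick_from V L" and xy: "{x, y} \<in> \<pi> L" "x \<noteq> y"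
    and V_low: "\<And>v. v \<in> V \<Longrightarrow> L \<le> length v"
  defines "A \<equiv> {v \<in> V. L < length v \<and> take L v \<in> {x, y}}" and "B \<equiv> {v \<in> V. take L v \<notin> {x, y}}"
  shows "(\<lambda>l. {e \<in> \<pi> l. e \<subseteq> A}) \<in> wick_from A (Suc L)"
    and "(\<lambda>l. {e \<in> \<pi> l. e \<subseteq> B}) \<in> wick_from B L"
    and "\<pi> l = {e \<in> \<pi> l. e \<subseteq> A} \<union> {e \<in> \<pi> l. e \<subseteq> B} \<union> (if l = L then {{x, y}} else {})"
proof -
  have blocks: "e \<subseteq> A \<or> e \<subseteq> B \<or> (l = L \<and> e = {x, y})" if "e \<in> \<pi> l" for e l
    using wick_from_block_cases[OF \<pi> xy that] by (simp add: A_def B_def)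
  have "x \<notin> A" "y \<notin> A" "x \<notin> B" "y \<notin> B" "A \<inter> B = {}"
    using wick_from_mem(2)[OF \<pi> xy(1)] by (auto simp: A_def B_def)
  then have closed: "\<And>l e. e \<in> \<pi> l \<Longrightarrow> e \<inter> A \<noteq> {} \<Longrightarrow> e \<subseteq> A"
    "\<And>l e. e \<in> \<pi> l \<Longrightarrow> e \<inter> B \<noteq> {} \<Longrightarrow> e \<subseteq> B"
    using blocks by auto
  show "(\<lambda>l. {e \<in> \<pi> l. e \<subseteq> A}) \<in> wick_from A (Suc L)"
    by (rule wick_from_restrict[OF \<pi> _ _ closed(1)]) (auto simp: A_def take_butlast)
  show "(\<lambda>l. {e \<in> \<pi> l. e \<subseteq> B}) \<in> wick_from B L"
    by (rule wick_from_restrict[OF \<pi> _ _ closed(2)]) (auto simp: B_def V_low take_butlast)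
  show "\<pi> l = {e \<in> \<pi> l. e \<subseteq> A} \<union> {e \<in> \<pi> l. e \<subseteq> B} \<union> (if l = L then {{x, y}} else {})"
    using xy(1) blocks[of _ l] by (auto split: if_split_asm)
qed

lemma wick_from_join_at_block:
  assumes V_low: "\<And>v. v \<in> V \<Longrightarrow> L \<le> length v"
    and x: "x \<in> layer V L" and y: "y \<in> layer V L" and "x \<noteq> y"
  defines "A \<equiv> {v \<in> V. L < length v \<and> take L v \<in> {x, y}}" and "B \<equiv> {v \<in> V. take L v \<notin> {x, y}}"
  assumes \<sigma>: "\<sigma> \<in> wick_from A (Suc L)" and \<rho>: "\<rho> \<in> wick_from B L"
  shows "(\<lambda>l. \<sigma> l \<union> \<rho> l \<union> (if l = L then {{x, y}} else {})) \<in> wick_from V L"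
    and "{e \<in> \<sigma> l \<union> \<rho> l \<union> (if l = L then {{x, y}} else {}). e \<subseteq> A} = \<sigma> l"
    and "{e \<in> \<sigma> l \<union> \<rho> l \<union> (if l = L then {{x, y}} else {}). e \<subseteq> B} = \<rho> l"
proof -
  have len: "length x = L" "length y = L" "x \<in> V" "y \<in> V"
    using x y by (auto simp: layer_def)
  have AB: "A \<inter> B = {}" "x \<notin> A" "y \<notin> A" "x \<notin> B" "y \<notin> B"
    using len by (auto simp: A_def B_def)
  have "L < length v" if "v \<in> V" "take L v \<in> {x, y}" "v \<notin> {x, y}" for v
    using V_low[OF that(1)] that(2,3) by (cases "length v = L") auto
  then have "V = A \<union> B \<union> {x, y}"
    using len by (auto simp: A_def B_def)
  moreover have "(\<lambda>l. \<sigma> l \<union> \<rho> l \<union> (if l = L then {{x, y}} else {})) \<in> wick_from (A \<union> B \<union> {x, y}) L"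
    using AB len(1,2) \<open>x \<noteq> y\<close> by (intro wick_from_merge[OF \<sigma> \<rho>]) (auto simp: A_def butlast_conv_take)
  ultimately show "(\<lambda>l. \<sigma> l \<union> \<rho> l \<union> (if l = L then {{x, y}} else {})) \<in> wick_from V L"
    by simp
  have \<sigma>A: "e \<subseteq> A \<and> \<not> e \<subseteq> B" if "e \<in> \<sigma> l" for e
    using wick_from_nonempty[OF \<sigma> that] wick_from_mem(1)[OF \<sigma> that] AB(1) by blast
  have \<rho>B: "e \<subseteq> B \<and> \<not> e \<subseteq> A" if "e \<in> \<rho> l" for e
    using wick_from_nonempty[OF \<rho> that] wick_from_mem(1)[OF \<rho> that] AB(1) by blast
  show "{e \<in> \<sigma> l \<union> \<rho> l \<union> (if l = L then {{x, y}} else {}). e \<subseteq> A} = \<sigma> l"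
    and "{e \<in> \<sigma> l \<union> \<rho> l \<union> (if l = L then {{x, y}} else {}). e \<subseteq> B} = \<rho> l"
    using AB \<sigma>A \<rho>B by auto
qed

lemma card_wick_from_with_block:
  assumes V_low: "\<And>v. v \<in> V \<Longrightarrow> L \<le> length v"
    and x: "x \<in> layer V L" and y: "y \<in> layer V L" and "x \<noteq> y"
  shows "card {\<pi> \<in> wick_from V L. {x, y} \<in> \<pi> L} =
    card (wick_from {v \<in> V. L < length v \<and> take L v \<in> {x, y}} (Suc L)) *
    card (wick_from {v \<in> V. take L v \<notin> {x, y}} L)"
proof -
  let ?A = "{v \<in> V. L < length v \<and> take L v \<in> {x, y}}" and ?B = "{v \<in> V. take L v \<notin> {x, y}}"
  let ?split = "\<lambda>\<pi>. (\<lambda>l. {e \<in> \<pi> l. e \<subseteq> ?A}, \<lambda>l. {e \<in> \<pi> l. e \<subseteq> ?B})"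
  let ?join = "\<lambda>(\<sigma>, \<rho>) l. \<sigma> l \<union> \<rho> l \<union> (if l = L then {{x, y}} else {})"
  have "bij_betw ?split {\<pi> \<in> wick_from V L. {x, y} \<in> \<pi> L} (wick_from ?A (Suc L) \<times> wick_from ?B L)"
  proof (rule bij_betw_byWitness[where f' = ?join])
    show "\<forall>\<pi> \<in> {\<pi> \<in> wick_from V L. {x, y} \<in> \<pi> L}. ?join (?split \<pi>) = \<pi>"
      using wick_from_split_at_block(3)[OF _ _ \<open>x \<noteq> y\<close> V_low] by (auto intro!: ext)
    show "\<forall>p \<in> wick_from ?A (Suc L) \<times> wick_from ?B L. ?split (?join p) = p"
      using wick_from_join_at_block(2,3)[OF V_low x y \<open>x \<noteq> y\<close>] by auto
    show "?split ` {\<pi> \<in> wick_from V L. {x, y} \<in> \<pi> L} \<subseteq> wick_from ?A (Suc L) \<times> wick_from ?B L"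
      using wick_from_split_at_block(1,2)[OF _ _ \<open>x \<noteq> y\<close> V_low] by auto
    show "?join ` (wick_from ?A (Suc L) \<times> wick_from ?B L) \<subseteq> {\<pi> \<in> wick_from V L. {x, y} \<in> \<pi> L}"
      using wick_from_join_at_block(1)[OF V_low x y \<open>x \<noteq> y\<close>] by auto
  qed
  then show ?thesis
    by (simp add: bij_betw_same_card card_cartesian_product)
qed

lemma finite_wick_from:
  assumes "finite V"
  shows "finite (wick_from V L)"
proof -
  have "\<pi> l \<in> Pow (Pow V)" "l \<notin> length ` V \<Longrightarrow> \<pi> l = {}" if "\<pi> \<in> wick_from V L" for \<pi> l
    using wick_from_mem[OF that] wick_from_nonempty[OF that] by blast+
  then have "wick_from V L \<subseteq> {\<pi>. \<forall>l. (l \<in> length ` V \<longrightarrow> \<pi> l \<in> Pow (Pow V)) \<and> (l \<notin> length ` V \<longrightarrow> \<pi> l = {})}"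
    by blast
  moreover have "finite {\<pi>. \<forall>l. (l \<in> length ` V \<longrightarrow> \<pi> l \<in> Pow (Pow V)) \<and> (l \<notin> length ` V \<longrightarrow> \<pi> l = {})}"
    using assms by (intro finite_set_of_finite_funs) auto
  ultimately show ?thesis
    by (rule finite_subset)
qed

lemma wick_from_empty: "wick_from {} L = {\<lambda>_. {}}"
proof -
  have "\<pi> = (\<lambda>_. {})" if "\<pi> \<in> wick_from {} L" for \<pi>
    using wick_from_mem(1)[OF that] wick_from_nonempty[OF that] by blast
  moreover have "(\<lambda>_. {}) \<in> wick_from {} L"
    by (simp add: wick_from_def layer_def is_pairing_empty)
  ultimately show ?thesis
    by blast
qed

lemma card_wick_from_rec:
  assumes "finite V" and x: "x \<in> layer V L" and V_low: "\<And>v. v \<in> V \<Longrightarrow> L \<le> length v"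
  shows "card (wick_from V L) = (\<Sum>y \<in> layer V L - {x}.
    card (wick_from {v \<in> V. L < length v \<and> take L v \<in> {x, y}} (Suc L)) *
    card (wick_from {v \<in> V. take L v \<notin> {x, y}} L))"
proof -
  let ?W = "\<lambda>y. {\<pi> \<in> wick_from V L. {x, y} \<in> \<pi> L}"
  have "wick_from V L = (\<Union>y \<in> layer V L - {x}. ?W y)"
  proof (intro equalityI subsetI)
    fix \<pi> assume \<pi>: "\<pi> \<in> wick_from V L"
    then obtain y where "y \<noteq> x" "{x, y} \<in> \<pi> L"
      using is_pairing_partner[OF wick_from_pairing[OF \<pi> order_refl] x] by metis
    moreover have "y \<in> layer V L"
      using wick_from_mem[OF \<pi> \<open>{x, y} \<in> \<pi> L\<close>] by (simp add: layer_def)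
    ultimately show "\<pi> \<in> (\<Union>y \<in> layer V L - {x}. ?W y)"
      using \<pi> by blast
  qed blast
  moreover have "?W y \<inter> ?W y' = {}" if "y \<in> layer V L - {x}" "y' \<in> layer V L - {x}" "y \<noteq> y'" for y y'
    using that is_pairing_unique[OF wick_from_pairing[OF _ order_refl], of _ V L "{x, y}" "{x, y'}" x]
    by (auto simp: doubleton_eq_iff)
  moreover have "card (\<Union>y \<in> layer V L - {x}. ?W y) = (\<Sum>y \<in> layer V L - {x}. card (?W y))"
    by (rule card_UN_disjoint) (use \<open>finite V\<close> calculation(2) finite_wick_from in \<open>auto simp: layer_def\<close>)
  ultimately have "card (wick_from V L) = (\<Sum>y \<in> layer V L - {x}. card (?W y))"
    by simp
  also have "\<dots> = (\<Sum>y \<in> layer V L - {x}.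
      card (wick_from {v \<in> V. L < length v \<and> take L v \<in> {x, y}} (Suc L)) *
      card (wick_from {v \<in> V. take L v \<notin> {x, y}} L))"
    using card_wick_from_with_block[OF V_low x] by (intro sum.cong) auto
  finally show ?thesis .
qed

lemma wick_from_cong:
  assumes "\<And>l. L \<le> l \<Longrightarrow> layer V l = layer W l"
  shows "wick_from V L = wick_from W L"
  unfolding wick_from_def by (simp add: assms)

lemma wick_pairings_eq_wick_from: "wick_pairings T = wick_from (positions T) 1"
  unfolding wick_pairings_def wick_from_def layer_def verts_at_def
  by (simp add: numeral_2_eq_2 Suc_le_eq less_one)

section \<open>Forests\<close>

lemma Nil_in_positions: "[] \<in> positions t"
  by (cases t) simp

lemma finite_positions: "finite (positions t)"
  by (induction t rule: positions.induct) auto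

lemma Cons_in_positions_iff:
  "k # p \<in> positions t \<longleftrightarrow> k < length (children t) \<and> p \<in> positions (children t ! k)"
  by (cases t) auto

definition forest :: "nat list set \<Rightarrow> (nat list \<Rightarrow> otree) \<Rightarrow> nat list set" where
  "forest Q T = (\<Union>q \<in> Q. (@) q ` positions (T q))"

lemma forestI: "q \<in> Q \<Longrightarrow> p \<in> positions (T q) \<Longrightarrow> q @ p \<in> forest Q T"
  unfolding forest_def by blast

lemma forestE:
  assumes "v \<in> forest Q T"
  obtains q p where "q \<in> Q" "p \<in> positions (T q)" "v = q @ p"
  using assms unfolding forest_def by blast

lemma finite_forest: "finite Q \<Longrightarrow> finite (forest Q T)"
  unfolding forest_def by (simp add: finite_positions)

lemma forest_cong: "(\<And>q. q \<in> Q \<Longrightarrow> T q = T' q) \<Longrightarrow> forest Q T = forest Q T'"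
  unfolding forest_def by simp

lemma forest_empty [simp]: "forest {} T = {}"
  by (simp add: forest_def)

lemma length_ge_forest: "(\<And>q. q \<in> Q \<Longrightarrow> length q = L) \<Longrightarrow> v \<in> forest Q T \<Longrightarrow> L \<le> length v"
  unfolding forest_def by auto

lemma layer_forest:
  assumes "\<And>q. q \<in> Q \<Longrightarrow> length q = L"
  shows "layer (forest Q T) L = Q"
  unfolding layer_def
proof (intro equalityI subsetI)
  fix v assume "v \<in> {v \<in> forest Q T. length v = L}"
  then obtain q p where "q \<in> Q" "v = q @ p" "length v = L"
    unfolding forest_def by blast
  then show "v \<in> Q"
    using assms by simp
next
  fix q assume "q \<in> Q"
  then have "q @ [] \<in> forest Q T"
    unfolding forest_def using Nil_in_positions by blast
  then show "q \<in> {v \<in> forest Q T. length v = L}"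
    using assms \<open>q \<in> Q\<close> by simp
qed

lemma forest_outside:
  assumes "\<And>q. q \<in> Q \<Longrightarrow> length q = L"
  shows "{v \<in> forest Q T. take L v \<notin> B} = forest (Q - B) T"
proof (intro equalityI subsetI)
  fix v assume "v \<in> {v \<in> forest Q T. take L v \<notin> B}"
  then obtain q p where "q \<in> Q" "p \<in> positions (T q)" "v = q @ p" "take L v \<notin> B"
    by (auto elim: forestE)
  then show "v \<in> forest (Q - B) T"
    using assms by (simp add: forestI)
next
  fix v assume "v \<in> forest (Q - B) T"
  then obtain q p where "q \<in> Q - B" "p \<in> positions (T q)" "v = q @ p"
    by (rule forestE)
  then show "v \<in> {v \<in> forest Q T. take L v \<notin> B}"
    using assms by (simp add: forestI)
qed

definition slots :: "nat list \<Rightarrow> nat \<Rightarrow> nat list set" where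
  "slots q d = (\<lambda>k. q @ [k]) ` {..<d}"

lemma mem_slots_iff: "r \<in> slots q d \<longleftrightarrow> (\<exists>k<d. r = q @ [k])"
  unfolding slots_def by auto

lemma finite_slots: "finite (slots q d)"
  by (simp add: slots_def)

lemma slots_disjoint: "x \<noteq> y \<Longrightarrow> slots x d \<inter> slots y d' = {}"
  unfolding slots_def by auto

lemma card_slots: "card (slots q d) = d"
  unfolding slots_def by (simp add: card_image inj_on_def)

definition child_roots :: "nat list set \<Rightarrow> (nat list \<Rightarrow> otree) \<Rightarrow> nat list set" where
  "child_roots B T = (\<Union>q \<in> B. slots q (length (children (T q))))"

lemma mem_child_roots_iff: "r \<in> child_roots B T \<longleftrightarrow> (\<exists>q \<in> B. \<exists>k < length (children (T q)). r = q @ [k])"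
  by (simp add: child_roots_def mem_slots_iff)

definition child_tree :: "(nat list \<Rightarrow> otree) \<Rightarrow> nat list \<Rightarrow> otree" where
  "child_tree T q = children (T (butlast q)) ! last q"

lemma child_tree_snoc [simp]: "child_tree T (q @ [k]) = children (T q) ! k"
  by (simp add: child_tree_def)

lemma forest_below:
  assumes len: "\<And>q. q \<in> Q \<Longrightarrow> length q = L" and "B \<subseteq> Q"
  shows "{v \<in> forest Q T. L < length v \<and> take L v \<in> B} = forest (child_roots B T) (child_tree T)"
proof (intro equalityI subsetI)
  fix v assume "v \<in> {v \<in> forest Q T. L < length v \<and> take L v \<in> B}"
  then obtain q p where v: "q \<in> Q" "p \<in> positions (T q)" "v = q @ p" "L < length v" "take L v \<in> B"
    by (auto elim: forestE)
  then have "q \<in> B" "p \<noteq> []"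
    using len[OF \<open>q \<in> Q\<close>] by auto
  then obtain k p' where p: "p = k # p'"
    by (meson neq_Nil_conv)
  then have "k < length (children (T q))" "p' \<in> positions (child_tree T (q @ [k]))"
    using v(2) by (simp_all add: Cons_in_positions_iff)
  moreover have "q @ [k] \<in> child_roots B T" if "k < length (children (T q))"
    using that \<open>q \<in> B\<close> unfolding mem_child_roots_iff by blast
  ultimately have "(q @ [k]) @ p' \<in> forest (child_roots B T) (child_tree T)"
    by (intro forestI)
  then show "v \<in> forest (child_roots B T) (child_tree T)"
    using v(3) p by simp
next
  fix v assume "v \<in> forest (child_roots B T) (child_tree T)"
  then obtain r p where r: "r \<in> child_roots B T" "p \<in> positions (child_tree T r)" "v = r @ p"
    by (rule forestE)
  then obtain q k where q: "r = q @ [k]" "q \<in> B" "k < length (children (T q))"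
    unfolding mem_child_roots_iff by blast
  then have "q @ (k # p) \<in> forest Q T"
    using r(2) \<open>B \<subseteq> Q\<close> by (intro forestI) (auto simp: Cons_in_positions_iff)
  moreover have "length q = L"
    using len \<open>B \<subseteq> Q\<close> q(2) by blast
  ultimately show "v \<in> {v \<in> forest Q T. L < length v \<and> take L v \<in> B}"
    using r(3) q by simp
qed

lemma forest_child_roots_cong:
  assumes "\<And>q. q \<in> B \<Longrightarrow> T q = T' q"
  shows "forest (child_roots B T) (child_tree T) = forest (child_roots B T') (child_tree T')"
proof -
  have "child_roots B T = child_roots B T'"
    unfolding child_roots_def using assms by simp
  moreover have "child_tree T r = child_tree T' r" if r: "r \<in> child_roots B T" for r
  proof -
    obtain q k where "r = q @ [k]" "q \<in> B"
      using r unfolding mem_child_roots_iff by blast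
    then show ?thesis
      using assms by simp
  qed
  ultimately show ?thesis
    using forest_cong[of "child_roots B T" "child_tree T" "child_tree T'"] by simp
qed

lemma card_wick_forest_rec:
  assumes "finite Q" and len: "\<And>q. q \<in> Q \<Longrightarrow> length q = L" and "x \<in> Q"
  shows "card (wick_from (forest Q T) L) = (\<Sum>y \<in> Q - {x}.
    card (wick_from (forest (child_roots {x, y} T) (child_tree T)) (Suc L)) *
    card (wick_from (forest (Q - {x, y}) T) L))"
proof -
  have "card (wick_from (forest Q T) L) = (\<Sum>y \<in> layer (forest Q T) L - {x}.
      card (wick_from {v \<in> forest Q T. L < length v \<and> take L v \<in> {x, y}} (Suc L)) *
      card (wick_from {v \<in> forest Q T. take L v \<notin> {x, y}} L))"
    using assms by (intro card_wick_from_rec finite_forest) (auto simp: layer_forest length_ge_forest[OF len])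
  also have "\<dots> = (\<Sum>y \<in> Q - {x}.
      card (wick_from (forest (child_roots {x, y} T) (child_tree T)) (Suc L)) *
      card (wick_from (forest (Q - {x, y}) T) L))"
  proof (rule sum.cong)
    fix y assume "y \<in> Q - {x}"
    then show "card (wick_from {v \<in> forest Q T. L < length v \<and> take L v \<in> {x, y}} (Suc L)) *
        card (wick_from {v \<in> forest Q T. take L v \<notin> {x, y}} L) =
      card (wick_from (forest (child_roots {x, y} T) (child_tree T)) (Suc L)) *
        card (wick_from (forest (Q - {x, y}) T) L)"
      using forest_below[OF len, where B = "{x, y}" and T = T] forest_outside[OF len, where B = "{x, y}" and T = T]
        \<open>x \<in> Q\<close>
      by simp
  qed (simp add: layer_forest[OF len])
  finally show ?thesis .
qed

section \<open>Gaussian moments\<close>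

definition normal_moment :: "nat \<Rightarrow> nat" where
  "normal_moment n = (if even n then odd_dfact (n div 2) else 0)"

lemma normal_moment_0 [simp]: "normal_moment 0 = 1"
  by (simp add: normal_moment_def odd_dfact_def)

lemma normal_moment_Suc_Suc: "normal_moment (Suc (Suc n)) = Suc n * normal_moment n"
proof (cases "even n")
  case True
  then obtain k where "n = 2 * k" by blast
  then show ?thesis
    by (simp add: normal_moment_def odd_dfact_def)
qed (simp add: normal_moment_def)

lemma odd_dfact_mult_fact: "real (odd_dfact k) * 2 ^ k * fact k = fact (2 * k)"
proof (induction k)
  case (Suc k)
  have "real (odd_dfact (Suc k)) * 2 ^ Suc k * fact (Suc k) =
      (real (odd_dfact k) * 2 ^ k * fact k) * ((2 * real k + 1) * (2 * real k + 2))"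
    by (simp add: odd_dfact_def algebra_simps)
  also have "\<dots> = fact (2 * k) * ((2 * real k + 1) * (2 * real k + 2))"
    by (simp only: Suc.IH)
  also have "\<dots> = fact (2 * Suc k)"
    by (simp add: algebra_simps)
  finally show ?case .
qed (simp add: odd_dfact_def)

lemma has_bochner_integral_normal_moment:
  "has_bochner_integral lborel (\<lambda>x. std_normal_density x * x ^ n) (real (normal_moment n))"
proof (cases "even n")
  case True
  then obtain k where k: "n = 2 * k" by blast
  have "fact (2 * k) / (2 ^ k * fact k) = real (odd_dfact k)"
    using odd_dfact_mult_fact[of k] by (simp add: field_simps)
  then show ?thesis
    using std_normal_moment_even[of k] k by (simp add: normal_moment_def)
next
  case False
  then obtain k where "n = 2 * k + 1" by (metis oddE)
  then show ?thesis
    using std_normal_moment_odd[of k] by (simp add: normal_moment_def)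
qed

lemma tau2_Suc_0: "tau2 c D tau0 (Suc 0) = tau0 ^ 2"
proof -
  have "has_bochner_integral lborel (\<lambda>x. tau0 ^ 2 * (std_normal_density x * x ^ 2)) (tau0 ^ 2)"
    using has_bochner_integral_mult_right[OF has_bochner_integral_normal_moment[of 2]]
    by (simp add: normal_moment_def odd_dfact_def)
  then show ?thesis
    by (simp add: has_bochner_integral_integral_eq fpoly_def power_mult_distrib mult_ac)
qed

lemma tau2_Suc_Suc:
  "tau2 c D tau0 (Suc (Suc s)) = (\<Sum>d\<le>D. \<Sum>d'\<le>D.
    c (Suc s) d * c (Suc s) d' * (real (normal_moment (d + d')) * tau2 c D tau0 (Suc s) ^ ((d + d') div 2)))"
proof -
  let ?\<tau> = "tau2 c D tau0 (Suc s)"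
  let ?\<sigma> = "sqrt ?\<tau>"
  let ?a = "c (Suc s)"
  have "?\<sigma> ^ 2 = ?\<tau>"
    by (simp add: integral_nonneg_AE)
  then have moment: "?\<sigma> ^ n * real (normal_moment n) = real (normal_moment n) * ?\<tau> ^ (n div 2)" for n
    by (cases "even n") (auto simp: normal_moment_def power_mult elim!: evenE)
  have square: "std_normal_density x * (fpoly c D (Suc s) (?\<sigma> * x))\<^sup>2 =
      (\<Sum>d\<le>D. \<Sum>d'\<le>D. (?a d * ?a d' * ?\<sigma> ^ (d + d')) * (std_normal_density x * x ^ (d + d')))" for x
    by (simp add: fpoly_def power2_eq_square sum_product sum_distrib_left power_add power_mult_distrib
        mult_ac)
  have "has_bochner_integral lborel (\<lambda>x. std_normal_density x * (fpoly c D (Suc s) (?\<sigma> * x))\<^sup>2)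
      (\<Sum>d\<le>D. \<Sum>d'\<le>D. (?a d * ?a d' * ?\<sigma> ^ (d + d')) * real (normal_moment (d + d')))"
    unfolding square
    by (intro has_bochner_integral_sum has_bochner_integral_mult_right has_bochner_integral_normal_moment)
  then have "tau2 c D tau0 (Suc (Suc s)) =
      (\<Sum>d\<le>D. \<Sum>d'\<le>D. (?a d * ?a d' * ?\<sigma> ^ (d + d')) * real (normal_moment (d + d')))"
    by (simp only: tau2.simps(2) has_bochner_integral_integral_eq)
  then show ?thesis
    by (simp only: mult.assoc moment)
qed

lemma prod_list_mult_power_sum_list:
  fixes f :: "'a \<Rightarrow> 'b :: comm_monoid_mult"
  shows "prod_list (map f xs) * a ^ sum_list (map g xs) = prod_list (map (\<lambda>x. f x * a ^ g x) xs)"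
  by (induction xs) (simp_all add: power_add mult_ac)

lemma prod_remove_pair:
  assumes "finite Q" "x \<in> Q" "y \<in> Q" "x \<noteq> y"
  shows "(\<Prod>q \<in> Q. f q) = f x * f y * (\<Prod>q \<in> Q - {x, y}. f q)"
proof -
  have "(\<Prod>q \<in> Q. f q) = (\<Prod>q \<in> {x, y}. f q) * (\<Prod>q \<in> Q - {x, y}. f q)"
    using assms by (subst prod.subset_diff[of "{x, y}"]) (auto simp: mult.commute)
  then show ?thesis
    using assms(4) by simp
qed

lemma sum_PiE_Un:
  assumes "B \<inter> C = {}"
  shows "(\<Sum>T \<in> PiE (B \<union> C) (\<lambda>_. A). H T) =
    (\<Sum>T1 \<in> PiE B (\<lambda>_. A). \<Sum>T2 \<in> PiE C (\<lambda>_. A). H (merge B C (T1, T2)))"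
proof -
  have "bij_betw (merge B C) (PiE B (\<lambda>_. A) \<times> PiE C (\<lambda>_. A)) (PiE (B \<union> C) (\<lambda>_. A))"
  proof (rule bij_betw_byWitness[where f' = "\<lambda>T. (restrict T B, restrict T C)"])
    show "\<forall>p \<in> PiE B (\<lambda>_. A) \<times> PiE C (\<lambda>_. A). (restrict (merge B C p) B, restrict (merge B C p) C) = p"
      using assms by auto
    show "\<forall>T \<in> PiE (B \<union> C) (\<lambda>_. A). merge B C (restrict T B, restrict T C) = T"
      by simp
    show "merge B C ` (PiE B (\<lambda>_. A) \<times> PiE C (\<lambda>_. A)) \<subseteq> PiE (B \<union> C) (\<lambda>_. A)"
      using assms by (auto simp: PiE_iff)
    show "(\<lambda>T. (restrict T B, restrict T C)) ` PiE (B \<union> C) (\<lambda>_. A) \<subseteq> PiE B (\<lambda>_. A) \<times> PiE C (\<lambda>_. A)"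
      by (auto simp: PiE_iff)
  qed
  then show ?thesis
    by (simp add: sum.reindex_bij_betw[symmetric] sum.cartesian_product case_prod_beta')
qed

lemma sum_PiE_Un_mult:
  fixes f g :: "('a \<Rightarrow> 'b) \<Rightarrow> 'c :: comm_semiring_0"
  assumes "B \<inter> C = {}" and "\<And>T. f (restrict T B) = f T" and "\<And>T. g (restrict T C) = g T"
  shows "(\<Sum>T \<in> PiE (B \<union> C) (\<lambda>_. A). f T * g T) =
    (\<Sum>T \<in> PiE B (\<lambda>_. A). f T) * (\<Sum>T \<in> PiE C (\<lambda>_. A). g T)"
proof -
  have "f (merge B C (T1, T2)) = f T1" "g (merge B C (T1, T2)) = g T2" for T1 T2
    by (metis assms restrict_merge)+
  then show ?thesis
    using assms(1) by (simp add: sum_PiE_Un sum_product)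
qed

lemma sum_PiE_doubleton:
  assumes "x \<noteq> y" and "\<And>T. F (restrict T {x, y}) = F T"
  shows "(\<Sum>T \<in> PiE {x, y} (\<lambda>_. A). F T) = (\<Sum>a \<in> A. \<Sum>b \<in> A. F ((\<lambda>_. b)(x := a)))"
proof -
  let ?h = "\<lambda>(a, b). restrict ((\<lambda>_. b)(x := a)) {x, y}"
  have "bij_betw ?h (A \<times> A) (PiE {x, y} (\<lambda>_. A))"
  proof (rule bij_betw_byWitness[where f' = "\<lambda>T. (T x, T y)"])
    show "\<forall>p \<in> A \<times> A. (?h p x, ?h p y) = p"
      using assms(1) by auto
    show "\<forall>T \<in> PiE {x, y} (\<lambda>_. A). ?h (T x, T y) = T"
      using assms(1) by (auto simp: PiE_iff extensional_def fun_eq_iff)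
    show "?h ` (A \<times> A) \<subseteq> PiE {x, y} (\<lambda>_. A)"
    proof (rule image_subsetI)
      fix p assume "p \<in> A \<times> A"
      then show "?h p \<in> PiE {x, y} (\<lambda>_. A)"
        by (cases p) (simp add: Pi_iff)
    qed
    show "(\<lambda>T. (T x, T y)) ` PiE {x, y} (\<lambda>_. A) \<subseteq> A \<times> A"
      by auto
  qed
  then have "(\<Sum>T \<in> PiE {x, y} (\<lambda>_. A). F T) = (\<Sum>p \<in> A \<times> A. F (?h p))"
    by (simp add: sum.reindex_bij_betw)
  then show ?thesis
    by (simp add: assms(2) sum.cartesian_product case_prod_beta')
qed

definition slot_trees :: "(nat list \<Rightarrow> otree) \<Rightarrow> nat list \<Rightarrow> nat \<Rightarrow> otree list" where
  "slot_trees T q d = map (\<lambda>k. T (q @ [k])) [0..<d]"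

lemma slot_trees_cong: "(\<And>r. r \<in> slots q d \<Longrightarrow> T r = T' r) \<Longrightarrow> slot_trees T q d = slot_trees T' q d"
  by (simp add: slot_trees_def slots_def)

lemma sum_lists_eq_sum_PiE_slots:
  "(\<Sum>cs \<in> {cs. set cs \<subseteq> A \<and> length cs = d}. G cs) =
    (\<Sum>T \<in> PiE (slots q d) (\<lambda>_. A). G (slot_trees T q d))"
proof -
  have "bij_betw (\<lambda>T. slot_trees T q d) (PiE (slots q d) (\<lambda>_. A)) {cs. set cs \<subseteq> A \<and> length cs = d}"
  proof (rule bij_betw_byWitness[where f' = "\<lambda>cs. restrict (\<lambda>r. cs ! last r) (slots q d)"])
    show "\<forall>T \<in> PiE (slots q d) (\<lambda>_. A). restrict (\<lambda>r. slot_trees T q d ! last r) (slots q d) = T"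
      by (auto simp: slot_trees_def slots_def PiE_iff extensional_def fun_eq_iff)
    show "\<forall>cs \<in> {cs. set cs \<subseteq> A \<and> length cs = d}. slot_trees (restrict (\<lambda>r. cs ! last r) (slots q d)) q d = cs"
      by (auto simp: slot_trees_def slots_def intro: nth_equalityI)
    show "(\<lambda>T. slot_trees T q d) ` PiE (slots q d) (\<lambda>_. A) \<subseteq> {cs. set cs \<subseteq> A \<and> length cs = d}"
      by (auto simp: slot_trees_def slots_def PiE_iff)
    show "(\<lambda>cs. restrict (\<lambda>r. cs ! last r) (slots q d)) ` {cs. set cs \<subseteq> A \<and> length cs = d} \<subseteq> PiE (slots q d) (\<lambda>_. A)"
      by (auto simp: slots_def)
  qed
  from sum.reindex_bij_betw[OF this, of G] show ?thesis
    by simp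
qed

lemma prod_list_slot_trees: "prod_list (map f (slot_trees T q d)) = (\<Prod>r \<in> slots q d. f (T r))"
proof -
  have "prod_list (map f (slot_trees T q d)) = (\<Prod>k \<in> {0..<d}. f (T (q @ [k])))"
    by (simp add: slot_trees_def prod.distinct_set_conv_list[symmetric])
  also have "\<dots> = (\<Prod>r \<in> slots q d. f (T r))"
    unfolding slots_def by (subst prod.reindex) (auto simp: inj_on_def atLeast0LessThan)
  finally show ?thesis .
qed

lemma forest_children_slot_trees:
  assumes "\<And>q. q \<in> B \<Longrightarrow> P q = Node (slot_trees T q (\<delta> q))"
  shows "forest (child_roots B P) (child_tree P) = forest (\<Union>q \<in> B. slots q (\<delta> q)) T"
proof -
  have "child_roots B P = (\<Union>q \<in> B. slots q (\<delta> q))"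
    using assms by (simp add: child_roots_def slot_trees_def)
  moreover have "child_tree P r = T r" if "r \<in> (\<Union>q \<in> B. slots q (\<delta> q))" for r
    using that assms by (auto simp: slots_def slot_trees_def)
  ultimately show ?thesis
    by (metis forest_cong)
qed

section \<open>Weighted counts of pairings of forests\<close>

definition valid_trees :: "nat \<Rightarrow> nat \<Rightarrow> otree set" where
  "valid_trees D s = {T. valid D s T}"

lemma valid_trees_0: "valid_trees D 0 = {Node []}"
proof -
  have "valid D 0 T \<longleftrightarrow> T = Node []" for T
    by (cases T) auto
  then show ?thesis
    unfolding valid_trees_def by auto
qed

lemma valid_trees_Suc:
  "valid_trees D (Suc s) = Node ` {cs. length cs \<le> D \<and> set cs \<subseteq> valid_trees D s}"
proof -
  have "valid D (Suc s) T \<longleftrightarrow> T \<in> Node ` {cs. length cs \<le> D \<and> set cs \<subseteq> valid_trees D s}" for T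
    by (cases T) (auto simp: valid_trees_def)
  then show ?thesis
    unfolding valid_trees_def by auto
qed

lemma finite_valid_trees: "finite (valid_trees D s)"
proof (induction s)
  case (Suc s)
  then have "finite {cs. set cs \<subseteq> valid_trees D s \<and> length cs \<le> D}"
    by (rule finite_lists_length_le)
  then show ?case
    unfolding valid_trees_Suc by (simp add: conj_commute)
qed (simp add: valid_trees_0)

lemma sum_valid_trees_Suc:
  "(\<Sum>T \<in> valid_trees D (Suc s). f T) =
    (\<Sum>d\<le>D. \<Sum>cs \<in> {cs. set cs \<subseteq> valid_trees D s \<and> length cs = d}. f (Node cs))"
proof -
  have "{cs. length cs \<le> D \<and> set cs \<subseteq> valid_trees D s} =
      (\<Union>d \<in> {..D}. {cs. set cs \<subseteq> valid_trees D s \<and> length cs = d})"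
    by auto
  then have "(\<Sum>T \<in> valid_trees D (Suc s). f T) =
      (\<Sum>cs \<in> (\<Union>d \<in> {..D}. {cs. set cs \<subseteq> valid_trees D s \<and> length cs = d}). f (Node cs))"
    unfolding valid_trees_Suc by (simp add: sum.reindex inj_on_def)
  also have "\<dots> = (\<Sum>d\<le>D. \<Sum>cs \<in> {cs. set cs \<subseteq> valid_trees D s \<and> length cs = d}. f (Node cs))"
    by (rule sum.UNION_disjoint) (auto intro: finite_lists_length_eq finite_valid_trees)
  finally show ?thesis .
qed

definition tree_mass :: "(nat \<Rightarrow> nat \<Rightarrow> real) \<Rightarrow> real \<Rightarrow> nat \<Rightarrow> otree \<Rightarrow> real" where
  "tree_mass c tau0 s T = subweight c s T * tau0 ^ level0 s T"

lemma tree_mass_Node_Nil [simp]: "tree_mass c tau0 0 (Node []) = tau0"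
  by (simp add: tree_mass_def)

lemma tree_mass_Node:
  "tree_mass c tau0 (Suc s) (Node cs) = c (Suc s) (length cs) * prod_list (map (tree_mass c tau0 s) cs)"
  by (simp add: tree_mass_def[abs_def] prod_list_mult_power_sum_list mult.assoc)

definition forest_weight ::
    "(nat \<Rightarrow> nat \<Rightarrow> real) \<Rightarrow> real \<Rightarrow> nat \<Rightarrow> nat \<Rightarrow> nat list set \<Rightarrow> (nat list \<Rightarrow> otree) \<Rightarrow> real" where
  "forest_weight c tau0 s L Q T =
     real (card (wick_from (forest Q T) L)) * (\<Prod>q \<in> Q. tree_mass c tau0 s (T q))"

definition pair_weight ::
    "(nat \<Rightarrow> nat \<Rightarrow> real) \<Rightarrow> real \<Rightarrow> nat \<Rightarrow> nat \<Rightarrow> nat list \<Rightarrow> nat list \<Rightarrow> (nat list \<Rightarrow> otree) \<Rightarrow> real" where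
  "pair_weight c tau0 s L x y T =
     real (card (wick_from (forest (child_roots {x, y} T) (child_tree T)) (Suc L))) *
     tree_mass c tau0 s (T x) * tree_mass c tau0 s (T y)"

definition forest_sum :: "(nat \<Rightarrow> nat \<Rightarrow> real) \<Rightarrow> nat \<Rightarrow> real \<Rightarrow> nat \<Rightarrow> nat \<Rightarrow> nat list set \<Rightarrow> real" where
  "forest_sum c D tau0 s L Q = (\<Sum>T \<in> PiE Q (\<lambda>_. valid_trees D s). forest_weight c tau0 s L Q T)"

definition pair_sum :: "(nat \<Rightarrow> nat \<Rightarrow> real) \<Rightarrow> nat \<Rightarrow> real \<Rightarrow> nat \<Rightarrow> nat \<Rightarrow> nat list \<Rightarrow> nat list \<Rightarrow> real" where
  "pair_sum c D tau0 s L x y = (\<Sum>T \<in> PiE {x, y} (\<lambda>_. valid_trees D s). pair_weight c tau0 s L x y T)"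

lemma forest_sum_empty: "forest_sum c D tau0 s L {} = 1"
  by (simp add: forest_sum_def forest_weight_def wick_from_empty)

lemma forest_weight_rec:
  assumes "finite Q" and "\<And>q. q \<in> Q \<Longrightarrow> length q = L" and "x \<in> Q"
  shows "forest_weight c tau0 s L Q T =
    (\<Sum>y \<in> Q - {x}. pair_weight c tau0 s L x y T * forest_weight c tau0 s L (Q - {x, y}) T)"
proof -
  let ?m = "tree_mass c tau0 s"
  have "forest_weight c tau0 s L Q T =
      (\<Sum>y \<in> Q - {x}. real (card (wick_from (forest (child_roots {x, y} T) (child_tree T)) (Suc L))) *
        real (card (wick_from (forest (Q - {x, y}) T) L)) * (\<Prod>q \<in> Q. ?m (T q)))"
    by (simp add: forest_weight_def card_wick_forest_rec[OF assms] sum_distrib_right)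
  also have "\<dots> = (\<Sum>y \<in> Q - {x}. pair_weight c tau0 s L x y T * forest_weight c tau0 s L (Q - {x, y}) T)"
  proof (rule sum.cong[OF refl])
    fix y assume "y \<in> Q - {x}"
    then have "(\<Prod>q \<in> Q. ?m (T q)) = ?m (T x) * ?m (T y) * (\<Prod>q \<in> Q - {x, y}. ?m (T q))"
      using assms(1,3) by (intro prod_remove_pair) auto
    then show "real (card (wick_from (forest (child_roots {x, y} T) (child_tree T)) (Suc L))) *
        real (card (wick_from (forest (Q - {x, y}) T) L)) * (\<Prod>q \<in> Q. ?m (T q)) =
      pair_weight c tau0 s L x y T * forest_weight c tau0 s L (Q - {x, y}) T"
      by (simp add: pair_weight_def forest_weight_def mult_ac)
  qed
  finally show ?thesis .
qed

lemma forest_sum_rec: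
  assumes "finite Q" and "\<And>q. q \<in> Q \<Longrightarrow> length q = L" and "x \<in> Q"
  shows "forest_sum c D tau0 s L Q =
    (\<Sum>y \<in> Q - {x}. pair_sum c D tau0 s L x y * forest_sum c D tau0 s L (Q - {x, y}))"
proof -
  let ?A = "valid_trees D s"
  have "forest_sum c D tau0 s L Q = (\<Sum>T \<in> PiE Q (\<lambda>_. ?A). \<Sum>y \<in> Q - {x}.
      pair_weight c tau0 s L x y T * forest_weight c tau0 s L (Q - {x, y}) T)"
    unfolding forest_sum_def using forest_weight_rec[OF assms] by simp
  also have "\<dots> = (\<Sum>y \<in> Q - {x}. \<Sum>T \<in> PiE Q (\<lambda>_. ?A).
      pair_weight c tau0 s L x y T * forest_weight c tau0 s L (Q - {x, y}) T)"
    by (rule sum.swap)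
  also have "\<dots> = (\<Sum>y \<in> Q - {x}. pair_sum c D tau0 s L x y * forest_sum c D tau0 s L (Q - {x, y}))"
  proof (rule sum.cong[OF refl])
    fix y assume "y \<in> Q - {x}"
    then have Q: "Q = {x, y} \<union> (Q - {x, y})"
      using \<open>x \<in> Q\<close> by auto
    have "pair_weight c tau0 s L x y (restrict T {x, y}) = pair_weight c tau0 s L x y T" for T
      using forest_child_roots_cong[of "{x, y}" "restrict T {x, y}" T] by (simp add: pair_weight_def)
    moreover have "forest_weight c tau0 s L (Q - {x, y}) (restrict T (Q - {x, y})) =
        forest_weight c tau0 s L (Q - {x, y}) T" for T
      using forest_cong[of "Q - {x, y}" "restrict T (Q - {x, y})" T] by (simp add: forest_weight_def)
    ultimately have "(\<Sum>T \<in> PiE ({x, y} \<union> (Q - {x, y})) (\<lambda>_. ?A).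
        pair_weight c tau0 s L x y T * forest_weight c tau0 s L (Q - {x, y}) T) =
      pair_sum c D tau0 s L x y * forest_sum c D tau0 s L (Q - {x, y})"
      unfolding pair_sum_def forest_sum_def by (intro sum_PiE_Un_mult) auto
    then show "(\<Sum>T \<in> PiE Q (\<lambda>_. ?A). pair_weight c tau0 s L x y T * forest_weight c tau0 s L (Q - {x, y}) T) =
        pair_sum c D tau0 s L x y * forest_sum c D tau0 s L (Q - {x, y})"
      by (simp only: Q[symmetric])
  qed
  finally show ?thesis .
qed

lemma forest_sum_eq_normal_moment:
  assumes pair: "\<And>x y. x \<noteq> y \<Longrightarrow> length x = L \<Longrightarrow> length y = L \<Longrightarrow> pair_sum c D tau0 s L x y = \<tau>"
    and "finite Q" and "\<And>q. q \<in> Q \<Longrightarrow> length q = L"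
  shows "forest_sum c D tau0 s L Q = real (normal_moment (card Q)) * \<tau> ^ (card Q div 2)"
  using assms(2,3)
proof (induction "card Q" arbitrary: Q rule: less_induct)
  case less
  show ?case
  proof (cases "Q = {}")
    case True
    then show ?thesis by (simp add: forest_sum_empty)
  next
    case False
    then obtain x where x: "x \<in> Q" by blast
    let ?rest = "real (normal_moment (card Q - 2)) * \<tau> ^ ((card Q - 2) div 2)"
    have "forest_sum c D tau0 s L Q = (\<Sum>y \<in> Q - {x}. pair_sum c D tau0 s L x y * forest_sum c D tau0 s L (Q - {x, y}))"
      by (rule forest_sum_rec[OF less.prems x])
    also have "\<dots> = (\<Sum>y \<in> Q - {x}. \<tau> * ?rest)"
    proof (rule sum.cong[OF refl])
      fix y assume y: "y \<in> Q - {x}"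
      then have "card (Q - {x, y}) = card Q - 2"
        using x less.prems(1) by (subst card_Diff_subset) auto
      moreover have "card Q \<ge> 2"
        using x y less.prems(1) card_mono[of Q "{x, y}"] by auto
      ultimately have "forest_sum c D tau0 s L (Q - {x, y}) = ?rest"
        using less.hyps[of "Q - {x, y}"] less.prems by auto
      moreover have "pair_sum c D tau0 s L x y = \<tau>"
        using pair x y less.prems(2) by auto
      ultimately show "pair_sum c D tau0 s L x y * forest_sum c D tau0 s L (Q - {x, y}) = \<tau> * ?rest"
        by simp
    qed
    also have "\<dots> = real (card Q - 1) * \<tau> * ?rest"
      using x less.prems(1) by simp
    also have "\<dots> = real (normal_moment (card Q)) * \<tau> ^ (card Q div 2)"
    proof -
      obtain n where n: "card Q = Suc n"
        using x less.prems(1) by (metis card_Suc_Diff1)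
      show ?thesis
      proof (cases n)
        case 0
        then show ?thesis using n by (simp add: normal_moment_def)
      next
        case (Suc k)
        then show ?thesis using n by (simp add: normal_moment_Suc_Suc algebra_simps)
      qed
    qed
    finally show ?thesis .
  qed
qed

lemma pair_sum_eq_sum_sum:
  assumes "x \<noteq> y"
  shows "pair_sum c D tau0 s L x y = (\<Sum>a \<in> valid_trees D s. \<Sum>b \<in> valid_trees D s.
    real (card (wick_from (forest (child_roots {x, y} ((\<lambda>_. b)(x := a))) (child_tree ((\<lambda>_. b)(x := a))))
      (Suc L))) * tree_mass c tau0 s a * tree_mass c tau0 s b)"
proof -
  have "forest (child_roots {x, y} (restrict T {x, y})) (child_tree (restrict T {x, y})) =
      forest (child_roots {x, y} T) (child_tree T)" for T
    by (rule forest_child_roots_cong) simp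
  then show ?thesis
    unfolding pair_sum_def pair_weight_def using assms by (subst sum_PiE_doubleton) auto
qed

lemma pair_sum_0: "x \<noteq> y \<Longrightarrow> pair_sum c D tau0 0 L x y = tau0 ^ 2"
  by (simp add: pair_sum_eq_sum_sum valid_trees_0 child_roots_def slots_def wick_from_empty power2_eq_square)

lemma sum_children_eq_forest_sum:
  assumes "x \<noteq> y"
  shows "(\<Sum>cs \<in> {cs. set cs \<subseteq> valid_trees D s \<and> length cs = d}.
      \<Sum>cs' \<in> {cs. set cs \<subseteq> valid_trees D s \<and> length cs = d'}.
      real (card (wick_from (forest (child_roots {x, y} ((\<lambda>_. Node cs')(x := Node cs)))
        (child_tree ((\<lambda>_. Node cs')(x := Node cs)))) (Suc L))) *
      prod_list (map (tree_mass c tau0 s) cs) * prod_list (map (tree_mass c tau0 s) cs')) =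
    forest_sum c D tau0 s (Suc L) (slots x d \<union> slots y d')"
    (is "(\<Sum>cs \<in> ?lists d. \<Sum>cs' \<in> ?lists d'. ?G cs cs') = _")
proof -
  let ?A = "valid_trees D s" and ?m = "tree_mass c tau0 s"
  have disj: "slots x d \<inter> slots y d' = {}"
    using assms by (rule slots_disjoint)
  have "(\<Sum>cs \<in> ?lists d. \<Sum>cs' \<in> ?lists d'. ?G cs cs') =
      (\<Sum>T1 \<in> PiE (slots x d) (\<lambda>_. ?A). \<Sum>T2 \<in> PiE (slots y d') (\<lambda>_. ?A).
        ?G (slot_trees T1 x d) (slot_trees T2 y d'))"
    by (simp only: sum_lists_eq_sum_PiE_slots[where q = x and d = d]
        sum_lists_eq_sum_PiE_slots[where q = y and d = d'])
  also have "\<dots> = (\<Sum>T \<in> PiE (slots x d \<union> slots y d') (\<lambda>_. ?A). ?G (slot_trees T x d) (slot_trees T y d'))"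
  proof -
    have "slot_trees (merge (slots x d) (slots y d') (T1, T2)) x d = slot_trees T1 x d"
      "slot_trees (merge (slots x d) (slots y d') (T1, T2)) y d' = slot_trees T2 y d'" for T1 T2
      using disj by (auto intro: slot_trees_cong)
    then show ?thesis
      using disj by (simp add: sum_PiE_Un)
  qed
  also have "\<dots> = forest_sum c D tau0 s (Suc L) (slots x d \<union> slots y d')"
    unfolding forest_sum_def forest_weight_def
  proof (rule sum.cong[OF refl])
    fix T
    let ?P = "(\<lambda>_. Node (slot_trees T y d'))(x := Node (slot_trees T x d))"
    have "forest (child_roots {x, y} ?P) (child_tree ?P) = forest (\<Union>q \<in> {x, y}. slots q (if q = x then d else d')) T"
      using assms by (intro forest_children_slot_trees) auto
    also have "\<dots> = forest (slots x d \<union> slots y d') T"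
      using assms by simp
    finally have "forest (child_roots {x, y} ?P) (child_tree ?P) = forest (slots x d \<union> slots y d') T" .
    moreover have "prod_list (map ?m (slot_trees T x d)) * prod_list (map ?m (slot_trees T y d')) =
        (\<Prod>q \<in> slots x d \<union> slots y d'. ?m (T q))"
      using disj by (simp add: prod_list_slot_trees prod.union_disjoint slots_def)
    ultimately show "?G (slot_trees T x d) (slot_trees T y d') =
        real (card (wick_from (forest (slots x d \<union> slots y d') T) (Suc L))) *
        (\<Prod>q \<in> slots x d \<union> slots y d'. ?m (T q))"
      by (simp add: mult.assoc)
  qed
  finally show ?thesis .
qed

lemma pair_sum_Suc:
  assumes "x \<noteq> y"
  shows "pair_sum c D tau0 (Suc s) L x y = (\<Sum>d\<le>D. \<Sum>d'\<le>D.
    c (Suc s) d * c (Suc s) d' * forest_sum c D tau0 s (Suc L) (slots x d \<union> slots y d'))"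
proof -
  let ?lists = "\<lambda>d. {cs. set cs \<subseteq> valid_trees D s \<and> length cs = d}"
  define F where "F a b = real (card (wick_from (forest (child_roots {x, y} ((\<lambda>_. b)(x := a)))
    (child_tree ((\<lambda>_. b)(x := a)))) (Suc L)))" for a b
  let ?M = "tree_mass c tau0 (Suc s)"
  have "pair_sum c D tau0 (Suc s) L x y =
      (\<Sum>d\<le>D. \<Sum>cs \<in> ?lists d. \<Sum>d'\<le>D. \<Sum>cs' \<in> ?lists d'. F (Node cs) (Node cs') * ?M (Node cs) * ?M (Node cs'))"
    using assms by (simp add: pair_sum_eq_sum_sum sum_valid_trees_Suc F_def)
  also have "\<dots> = (\<Sum>d\<le>D. \<Sum>d'\<le>D. \<Sum>cs \<in> ?lists d. \<Sum>cs' \<in> ?lists d'. F (Node cs) (Node cs') * ?M (Node cs) * ?M (Node cs'))"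
    by (intro sum.cong refl sum.swap)
  also have "\<dots> = (\<Sum>d\<le>D. \<Sum>d'\<le>D. c (Suc s) d * c (Suc s) d' *
      (\<Sum>cs \<in> ?lists d. \<Sum>cs' \<in> ?lists d'. F (Node cs) (Node cs') *
        prod_list (map (tree_mass c tau0 s) cs) * prod_list (map (tree_mass c tau0 s) cs')))"
  proof (intro sum.cong refl)
    fix d d'
    have "(\<Sum>cs \<in> ?lists d. \<Sum>cs' \<in> ?lists d'. F (Node cs) (Node cs') * ?M (Node cs) * ?M (Node cs')) =
        (\<Sum>cs \<in> ?lists d. \<Sum>cs' \<in> ?lists d'. c (Suc s) d * c (Suc s) d' * (F (Node cs) (Node cs') *
          prod_list (map (tree_mass c tau0 s) cs) * prod_list (map (tree_mass c tau0 s) cs')))"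
      by (intro sum.cong refl) (auto simp: tree_mass_Node mult_ac)
    then show "(\<Sum>cs \<in> ?lists d. \<Sum>cs' \<in> ?lists d'. F (Node cs) (Node cs') * ?M (Node cs) * ?M (Node cs')) =
        c (Suc s) d * c (Suc s) d' * (\<Sum>cs \<in> ?lists d. \<Sum>cs' \<in> ?lists d'. F (Node cs) (Node cs') *
          prod_list (map (tree_mass c tau0 s) cs) * prod_list (map (tree_mass c tau0 s) cs'))"
      by (simp add: sum_distrib_left)
  qed
  also have "\<dots> = (\<Sum>d\<le>D. \<Sum>d'\<le>D. c (Suc s) d * c (Suc s) d' * forest_sum c D tau0 s (Suc L) (slots x d \<union> slots y d'))"
    using sum_children_eq_forest_sum[OF assms] by (simp add: F_def)
  finally show ?thesis .
qed

lemma forest_sum_eq_tau2: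
  assumes "finite Q" and "\<And>q. q \<in> Q \<Longrightarrow> length q = L"
  shows "forest_sum c D tau0 s L Q = real (normal_moment (card Q)) * tau2 c D tau0 (Suc s) ^ (card Q div 2)"
  using assms
proof (induction s arbitrary: L Q)
  case 0
  have "pair_sum c D tau0 0 L x y = tau2 c D tau0 (Suc 0)" if "x \<noteq> y" for x y
    by (simp only: pair_sum_0[OF that] tau2_Suc_0)
  then show ?case
    using "0.prems" by (intro forest_sum_eq_normal_moment) auto
next
  case (Suc s)
  have "pair_sum c D tau0 (Suc s) L x y = tau2 c D tau0 (Suc (Suc s))"
    if "x \<noteq> y" "length x = L" "length y = L" for x y
  proof -
    have "forest_sum c D tau0 s (Suc L) (slots x d \<union> slots y d') =
        real (normal_moment (d + d')) * tau2 c D tau0 (Suc s) ^ ((d + d') div 2)" for d d'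
    proof -
      have "finite (slots x d \<union> slots y d')" "\<And>q. q \<in> slots x d \<union> slots y d' \<Longrightarrow> length q = Suc L"
        using that by (auto simp: slots_def)
      moreover have "card (slots x d \<union> slots y d') = d + d'"
        using slots_disjoint[OF \<open>x \<noteq> y\<close>] by (simp add: card_Un_disjoint card_slots finite_slots)
      ultimately show ?thesis
        using Suc.IH[of "slots x d \<union> slots y d'" "Suc L"] by simp
    qed
    then show ?thesis
      by (simp only: pair_sum_Suc[OF \<open>x \<noteq> y\<close>] tau2_Suc_Suc)
  qed
  then show ?case
    using Suc.prems by (intro forest_sum_eq_normal_moment) auto
qed

lemma Wick_Node:
  "Wick (Node cs) = card (wick_from (forest (child_roots {[]} (\<lambda>_. Node cs)) (child_tree (\<lambda>_. Node cs))) 1)"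
proof -
  have "forest {[]} (\<lambda>_. Node cs) = positions (Node cs)"
    by (simp add: forest_def)
  then have children: "{v \<in> positions (Node cs). 0 < length v} =
      forest (child_roots {[]} (\<lambda>_. Node cs)) (child_tree (\<lambda>_. Node cs))"
    using forest_below[of "{[]}" 0 "{[]}" "\<lambda>_. Node cs"] by simp
  have "layer (positions (Node cs)) l = layer {v \<in> positions (Node cs). 0 < length v} l" if "1 \<le> l" for l
    using that by (auto simp: layer_def)
  then have "wick_from (positions (Node cs)) 1 =
      wick_from (forest (child_roots {[]} (\<lambda>_. Node cs)) (child_tree (\<lambda>_. Node cs))) 1"
    by (intro wick_from_cong) (simp only: children)
  then show ?thesis
    by (simp add: Wick_def wick_pairings_eq_wick_from)
qed

lemma trees_eq_image_Node: "trees D t m = Node ` {cs. set cs \<subseteq> valid_trees D (t - 1) \<and> length cs = 2 * m}"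
  unfolding trees_def valid_trees_def by auto

lemma tree_weight_mult_num_leaves:
  "tree_weight c t (Node cs) * tau0 ^ num_leaves t (Node cs) = prod_list (map (tree_mass c tau0 (t - 1)) cs)"
  by (simp add: tree_weight_def num_leaves_def tree_mass_def[abs_def] prod_list_mult_power_sum_list)

lemma sum_Wick_Node_eq_forest_sum:
  "(\<Sum>cs \<in> {cs. set cs \<subseteq> valid_trees D s \<and> length cs = n}.
      real (Wick (Node cs)) * prod_list (map (tree_mass c tau0 s) cs)) =
    forest_sum c D tau0 s 1 (slots [] n)"
proof -
  let ?A = "valid_trees D s" and ?m = "tree_mass c tau0 s"
  have "(\<Sum>cs \<in> {cs. set cs \<subseteq> ?A \<and> length cs = n}. real (Wick (Node cs)) * prod_list (map ?m cs)) =
      (\<Sum>T \<in> PiE (slots [] n) (\<lambda>_. ?A).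
        real (Wick (Node (slot_trees T [] n))) * prod_list (map ?m (slot_trees T [] n)))"
    by (rule sum_lists_eq_sum_PiE_slots)
  also have "\<dots> = forest_sum c D tau0 s 1 (slots [] n)"
    unfolding forest_sum_def forest_weight_def
  proof (intro sum.cong refl)
    fix T
    have "forest (child_roots {[]} (\<lambda>_. Node (slot_trees T [] n))) (child_tree (\<lambda>_. Node (slot_trees T [] n))) =
        forest (slots [] n) T"
      using forest_children_slot_trees[of "{[]}" "\<lambda>_. Node (slot_trees T [] n)" T "\<lambda>_. n"] by simp
    then show "real (Wick (Node (slot_trees T [] n))) * prod_list (map ?m (slot_trees T [] n)) =
        real (card (wick_from (forest (slots [] n) T) 1)) * (\<Prod>q \<in> slots [] n. ?m (T q))"
      by (simp add: Wick_Node prod_list_slot_trees)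
  qed
  finally show ?thesis .
qed

theorem proposition4p2:
  fixes c :: "nat \<Rightarrow> nat \<Rightarrow> real" and D t m :: nat and tau0 :: real
  assumes "tau0 > 0" and "t \<ge> 1" and "m \<ge> 1"
  shows "tau2 c D tau0 t ^ m * real (odd_dfact m) =
    (\<Sum>T\<in>trees D t m. real (Wick T) * tree_weight c t T * tau0 ^ num_leaves t T)"
proof -
  obtain s where t: "t = Suc s"
    using \<open>t \<ge> 1\<close> by (cases t) auto
  have "(\<Sum>T\<in>trees D t m. real (Wick T) * tree_weight c t T * tau0 ^ num_leaves t T) =
      (\<Sum>cs \<in> {cs. set cs \<subseteq> valid_trees D s \<and> length cs = 2 * m}.
        real (Wick (Node cs)) * prod_list (map (tree_mass c tau0 s) cs))"
    by (simp add: t trees_eq_image_Node sum.reindex inj_on_def mult.assoc tree_weight_mult_num_leaves)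
  also have "\<dots> = forest_sum c D tau0 s 1 (slots [] (2 * m))"
    by (rule sum_Wick_Node_eq_forest_sum)
  also have "\<dots> = real (normal_moment (2 * m)) * tau2 c D tau0 t ^ m"
  proof -
    have "\<And>q. q \<in> slots [] (2 * m) \<Longrightarrow> length q = 1"
      by (auto simp: slots_def)
    from forest_sum_eq_tau2[of "slots [] (2 * m)" 1 c D tau0 s, OF finite_slots this] show ?thesis
      by (simp add: t card_slots del: tau2.simps)
  qed
  finally show ?thesis
    by (simp add: normal_moment_def)
qed

end
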